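(* Let $G$ be a tournament with matching ordering $v_1,\ldots,v_n$, and let $X=\{1,\ldots,n\}$. Suppose $\sigma\in S_n$ is such that $v_{\sigma(1)},\ldots,v_{\sigma(n)}$ is also a matching ordering of $G$. Then: (a) if $\sigma=\sigma_X$, then $G$ is either transitive or isomorphic to $P_n$, and the ordering $v_1,\ldots,v_n$ is $\pi_2 G$; (b) if $\sigma=\sigma_X^{-1}$, then $G$ is either transitive or isomorphic to $P_n$, and the ordering $v_1,\ldots,v_n$ is $\pi_1 G$; (c) if $n=4$ and $\sigma=\tau_X$, then $G$ is isomorphic to $P_4$, and the ordering $v_1,\ldots,v_4$ is either $\pi_2 G$ or $\pi_2\pi_1 G$.
   Context: A tournament is a finite, non-null, loopless directed graph in which for any two distinct vertices $u,v$ there is exactly one edge with both ends in $\{u,v\}$; write $u\to v$ for the edge from $u$ to $v$. Given an ordering $v_1,\dots,v_n$ of the vertices, a backedge is an edge $v_j\to v_i$ with $j>i$; the ordering is a matching ordering if every vertex is the head or tail of at most one backedge. A tournament is transitive if it has an ordering $u_1,\dots,u_n$ with $u_i\to u_j$ for all $i<j$ (its standard ordering). $P_n$ is the tournament on $u_1,\dots,u_n$ with $u_i\to u_j$ if $j-i\ge2$ and $u_{i+1}\to u_i$ for $1\le i\le n-1$; for $n\ne3$ this defining ordering is unique. For $X=\{b,\dots,a\}$: if $|X|$ is odd, $\sigma_X=(b\ b{+}2\ \cdots\ a{-}2\ a\ a{-}1\ a{-}3\ \cdots\ b{+}1)$; if $|X|$ is even, $\sigma_X=(b\ b{+}2\ \cdots\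 a{-}1\ a\ a{-}2\ \cdots\ b{+}1)$ (identity if $|X|=1$, the transposition $(b\ a)$ if $|X|=2$); if $|X|=4$, $\tau_X=(b\ b{+}2)(b{+}1\ b{+}3)$. For a tournament $G$ on $n$ vertices that is transitive or isomorphic to $P_n$, let $u_1,\dots,u_n$ be its standard ordering (if transitive) or its defining $P_n$ ordering (for $P_3$: some defining ordering); then $\pi_1G$ is the ordering obtained from $u_1,\dots,u_n$ by swapping $u_{2j-1}$ and $u_{2j}$ for every $j$ with $2j\le n$, i.e. $u_2,u_1,u_4,u_3,\dots$; $\pi_2G$ is obtained by swapping $u_{2j}$ and $u_{2j+1}$ for every $j\ge1$ with $2j+1\le n$, i.e. $u_1,u_3,u_2,u_5,u_4,\dots$; and for $G\cong P_4$, $\pi_2\pi_1G$ is the ordering $u_2,u_4,u_1,u_3$. If $n=2$, any ordering counts as $\pi_1G$ and $\pi_2G$. *)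

theory Defs
  imports "HOL-Combinatorics.Combinatorics"
begin

definition tournament :: "'a set \<Rightarrow> ('a \<Rightarrow> 'a \<Rightarrow> bool) \<Rightarrow> bool" where
  "tournament V E \<longleftrightarrow> finite V \<and> V \<noteq> {} \<and> (\<forall>u\<in>V. \<not> E u u) \<and>
     (\<forall>u\<in>V. \<forall>w\<in>V. u \<noteq> w \<longrightarrow> (E u w \<longleftrightarrow> \<not> E w u))"

definition is_ordering :: "'a set \<Rightarrow> nat \<Rightarrow> (nat \<Rightarrow> 'a) \<Rightarrow> bool" where
  "is_ordering V n v \<longleftrightarrow> bij_betw v {1..n} V"

definition backedge :: "('a \<Rightarrow> 'a \<Rightarrow> bool) \<Rightarrow> (nat \<Rightarrow> 'a) \<Rightarrow> nat \<Rightarrow> nat \<Rightarrow> bool" where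
  "backedge E v i j \<longleftrightarrow> i < j \<and> E (v j) (v i)"

definition matching_ordering :: "'a set \<Rightarrow> ('a \<Rightarrow> 'a \<Rightarrow> bool) \<Rightarrow> nat \<Rightarrow> (nat \<Rightarrow> 'a) \<Rightarrow> bool" where
  "matching_ordering V E n v \<longleftrightarrow> is_ordering V n v \<and>
     (\<forall>i\<in>{1..n}. card {j\<in>{1..n}. backedge E v i j \<or> backedge E v j i} \<le> 1)"

definition transitive_ordering :: "'a set \<Rightarrow> ('a \<Rightarrow> 'a \<Rightarrow> bool) \<Rightarrow> nat \<Rightarrow> (nat \<Rightarrow> 'a) \<Rightarrow> bool" where
  "transitive_ordering V E n u \<longleftrightarrow> is_ordering V n u \<and>
     (\<forall>i\<in>{1..n}. \<forall>j\<in>{1..n}. i < j \<longrightarrow> E (u i) (u j))"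

definition transitive_tournament :: "'a set \<Rightarrow> ('a \<Rightarrow> 'a \<Rightarrow> bool) \<Rightarrow> bool" where
  "transitive_tournament V E \<longleftrightarrow> tournament V E \<and> (\<exists>u. transitive_ordering V E (card V) u)"

definition Pn_ordering :: "'a set \<Rightarrow> ('a \<Rightarrow> 'a \<Rightarrow> bool) \<Rightarrow> nat \<Rightarrow> (nat \<Rightarrow> 'a) \<Rightarrow> bool" where
  "Pn_ordering V E n u \<longleftrightarrow> is_ordering V n u \<and>
     (\<forall>i\<in>{1..n}. \<forall>j\<in>{1..n}. (i + 2 \<le> j \<longrightarrow> E (u i) (u j)) \<and> (j = i + 1 \<longrightarrow> E (u j) (u i)))"

definition iso_Pn :: "'a set \<Rightarrow> ('a \<Rightarrow> 'a \<Rightarrow> bool) \<Rightarrow> nat \<Rightarrow> bool" where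
  "iso_Pn V E n \<longleftrightarrow> tournament V E \<and> (\<exists>u. Pn_ordering V E n u)"

definition pi1 :: "nat \<Rightarrow> nat \<Rightarrow> nat" where
  "pi1 n i = (if odd i \<and> i + 1 \<le> n then i + 1 else if even i \<and> i \<ge> 2 \<and> i \<le> n then i - 1 else i)"

definition pi2 :: "nat \<Rightarrow> nat \<Rightarrow> nat" where
  "pi2 n i = (if even i \<and> i \<ge> 2 \<and> i + 1 \<le> n then i + 1 else if odd i \<and> i \<ge> 3 \<and> i \<le> n then i - 1 else i)"

(* v is the ordering obtained from the standard ordering (transitive case) or a defining P_n ordering u
   by the position permutation p: v_i = u_(p i) *)
definition is_pi_ordering :: "'a set \<Rightarrow> ('a \<Rightarrow> 'a \<Rightarrow> bool) \<Rightarrow> nat \<Rightarrow> (nat \<Rightarrow> nat) \<Rightarrow> (nat \<Rightarrow> 'a) \<Rightarrow> bool" where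
  "is_pi_ordering V E n p v \<longleftrightarrow>
     (\<exists>u. (transitive_ordering V E n u \<or> Pn_ordering V E n u) \<and> (\<forall>i\<in>{1..n}. v i = u (p i)))"

definition is_pi2pi1_P4_ordering :: "'a set \<Rightarrow> ('a \<Rightarrow> 'a \<Rightarrow> bool) \<Rightarrow> (nat \<Rightarrow> 'a) \<Rightarrow> bool" where
  "is_pi2pi1_P4_ordering V E v \<longleftrightarrow>
     (\<exists>u. Pn_ordering V E 4 u \<and> v 1 = u 2 \<and> v 2 = u 4 \<and> v 3 = u 1 \<and> v 4 = u 3)"

definition sigmaX :: "nat \<Rightarrow> nat \<Rightarrow> nat" where
  "sigmaX n = cycle_of_list (filter odd [1..<Suc n] @ rev (filter even [1..<Suc n]))"

definition tauX :: "nat \<Rightarrow> nat" where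
  "tauX = transpose 1 3 \<circ> transpose 2 4"

end

theory Submission
  imports Defs
begin

(* Let w = v \<circ> \<sigma> be the second matching ordering. In cases (a) and (b) list the vertices as
   u_k = v_(\<pi> k) with \<pi> = \<pi>_2 resp. \<pi>_1, so that u_k sits at position \<pi> k of v and at position
   \<pi>' k of w, where \<pi>' is the other one of \<pi>_1, \<pi>_2 (because \<sigma>_X = \<pi>_2 \<pi>_1). Both \<pi>_1 and \<pi>_2 keep the
   order of positions at distance at least 2, and exactly one of them swaps each adjacent pair.
   Hence each adjacent pair u_k, u_(k+1) is a backedge of exactly one of v, w, and a backward
   pair u_l -> u_k with l >= k + 2 would be a backedge of both, giving u_k two backedges in one
   of them. Two consecutive adjacent pairs share a vertex, so they are backedges of different
   orderings; since the relative order in v also alternates, all edges between u_k and u_(k+1)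
   point the same way, and u is a transitive ordering or a defining ordering of P_n.
   Case (c) is a finite analysis of the backedges between {v_1, v_2} and {v_3, v_4}. *)

lemma pi1_pi1 [simp]: "pi1 n (pi1 n i) = i"
  unfolding pi1_def by (auto; presburger)

lemma pi2_pi2 [simp]: "pi2 n (pi2 n i) = i"
  unfolding pi2_def by (auto; presburger)

lemma pi1_permutes: "pi1 n permutes {1..n}"
proof (rule bij_imp_permutes)
  show "bij_betw (pi1 n) {1..n} {1..n}"
    by (rule bij_betw_byWitness[where f' = "pi1 n"]) (auto simp: pi1_def; presburger)+
qed (auto simp: pi1_def; presburger)

lemma pi2_permutes: "pi2 n permutes {1..n}"
proof (rule bij_imp_permutes)
  show "bij_betw (pi2 n) {1..n} {1..n}"
    by (rule bij_betw_byWitness[where f' = "pi2 n"]) (auto simp: pi2_def; presburger)+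
qed (auto simp: pi2_def; presburger)

lemma pi1_strict_mono_gap: "1 \<le> k \<Longrightarrow> l \<le> n \<Longrightarrow> k + 2 \<le> l \<Longrightarrow> pi1 n k < pi1 n l"
  unfolding pi1_def by (auto; presburger)

lemma pi2_strict_mono_gap: "1 \<le> k \<Longrightarrow> l \<le> n \<Longrightarrow> k + 2 \<le> l \<Longrightarrow> pi2 n k < pi2 n l"
  unfolding pi2_def by (auto; presburger)

lemma pi1_less_pi1_Suc_iff: "1 \<le> k \<Longrightarrow> k + 1 \<le> n \<Longrightarrow> pi1 n k < pi1 n (k + 1) \<longleftrightarrow> even k"
  unfolding pi1_def by (auto; presburger)

lemma pi2_less_pi2_Suc_iff: "1 \<le> k \<Longrightarrow> k + 1 \<le> n \<Longrightarrow> pi2 n k < pi2 n (k + 1) \<longleftrightarrow> odd k"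
  unfolding pi2_def by (auto; presburger)

lemma filter_odd_upt: "filter odd [1..<Suc n] = map (\<lambda>k. 2 * k + 1) [0..<(n + 1) div 2]"
proof (induction n)
  case (Suc n)
  show ?case
  proof (cases "odd (Suc n)")
    case True
    then have "(Suc n + 1) div 2 = Suc ((n + 1) div 2)" "2 * ((n + 1) div 2) + 1 = Suc n"
      by presburger+
    then show ?thesis using Suc True by simp
  next
    case False
    then have "(Suc n + 1) div 2 = (n + 1) div 2" by presburger
    then show ?thesis using Suc False by simp
  qed
qed simp

lemma filter_even_upt: "filter even [1..<Suc n] = map (\<lambda>k. 2 * k + 2) [0..<n div 2]"
proof (induction n)
  case (Suc n)
  show ?case
  proof (cases "even (Suc n)")
    case True
    then have "Suc n div 2 = Suc (n div 2)" "2 * (n div 2) + 2 = Suc n" by presburger+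
    then show ?thesis using Suc True by simp
  next
    case False
    then have "Suc n div 2 = n div 2" by presburger
    then show ?thesis using Suc False by simp
  qed
qed simp

definition sigmaX_cycle :: "nat \<Rightarrow> nat list" where
  "sigmaX_cycle n = filter odd [1..<Suc n] @ rev (filter even [1..<Suc n])"

lemma sigmaX_eq_cycle_of_list: "sigmaX n = cycle_of_list (sigmaX_cycle n)"
  unfolding sigmaX_def sigmaX_cycle_def ..

lemma distinct_sigmaX_cycle: "distinct (sigmaX_cycle n)"
  unfolding sigmaX_cycle_def by auto

lemma length_sigmaX_cycle: "length (sigmaX_cycle n) = n"
  unfolding sigmaX_cycle_def filter_odd_upt filter_even_upt by simp

lemma nth_sigmaX_cycle:
  assumes "i < n"
  shows "sigmaX_cycle n ! i = (if i < (n + 1) div 2 then 2 * i + 1 else 2 * (n - i))"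
proof -
  have "n div 2 - (i - (n + 1) div 2) = n - i" if "\<not> i < (n + 1) div 2"
    using that assms by linarith
  then show ?thesis
    using assms unfolding sigmaX_cycle_def filter_odd_upt filter_even_upt
    by (auto simp: nth_append rev_nth)
qed

lemma pi2_pi1_nth_sigmaX_cycle:
  assumes "i < n"
  shows "pi2 n (pi1 n (sigmaX_cycle n ! i)) = sigmaX_cycle n ! (Suc i mod n)"
proof -
  have n: "Suc i mod n < n" using assms by simp
  consider "Suc i < (n + 1) div 2" | "Suc i = (n + 1) div 2" "Suc i < n"
    | "(n + 1) div 2 \<le> i" "Suc i < n" | "Suc i = n"
    using assms by linarith
  then show ?thesis
    unfolding nth_sigmaX_cycle[OF assms] nth_sigmaX_cycle[OF n]
    by cases (unfold pi1_def pi2_def; auto; presburger)+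
qed

lemma sigmaX_eq_pi2_pi1: "sigmaX n = pi2 n \<circ> pi1 n"
proof
  fix x
  have set_cycle: "set (sigmaX_cycle n) = {1..n}" unfolding sigmaX_cycle_def by auto
  show "sigmaX n x = (pi2 n \<circ> pi1 n) x"
  proof (cases "x \<in> {1..n}")
    case True
    then obtain i where i: "i < n" "x = sigmaX_cycle n ! i"
      using set_cycle length_sigmaX_cycle by (metis in_set_conv_nth)
    have "map (sigmaX n) (sigmaX_cycle n) = rotate1 (sigmaX_cycle n)"
      using cyclic_rotation[of "sigmaX_cycle n" 1] distinct_sigmaX_cycle
      unfolding sigmaX_eq_cycle_of_list by simp
    then have "sigmaX n x = rotate1 (sigmaX_cycle n) ! i"
      using i length_sigmaX_cycle by (metis nth_map)
    then show ?thesis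
      using i length_sigmaX_cycle pi2_pi1_nth_sigmaX_cycle by (simp add: nth_rotate1)
  next
    case False
    have "sigmaX n permutes {1..n}"
      using cycle_permutes[of "sigmaX_cycle n"] set_cycle
      unfolding sigmaX_eq_cycle_of_list by simp
    then show ?thesis
      using False permutes_not_in pi1_permutes pi2_permutes by (metis comp_apply)
  qed
qed

lemma inv_sigmaX_eq_pi1_pi2: "inv (sigmaX n) = pi1 n \<circ> pi2 n"
  unfolding sigmaX_eq_pi2_pi1 by (rule inv_unique_comp) (auto simp: fun_eq_iff)

lemma is_ordering_comp_permutes:
  "is_ordering V n v \<Longrightarrow> P permutes {1..n} \<Longrightarrow> is_ordering V n (v \<circ> P)"
  unfolding is_ordering_def by (metis bij_betw_trans permutes_imp_bij)

lemma matching_ordering_backedge_partner_unique: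
  assumes "matching_ordering V E n v" "i \<in> {1..n}" "j \<in> {1..n}" "j' \<in> {1..n}"
    and "backedge E v i j \<or> backedge E v j i" "backedge E v i j' \<or> backedge E v j' i"
  shows "j = j'"
proof (rule ccontr)
  let ?partners = "{j \<in> {1..n}. backedge E v i j \<or> backedge E v j i}"
  assume "j \<noteq> j'"
  then have "card {j, j'} = 2" by simp
  moreover have "card {j, j'} \<le> card ?partners"
    using assms(3-6) by (intro card_mono) auto
  moreover have "card ?partners \<le> 1"
    using assms(1,2) unfolding matching_ordering_def by blast
  ultimately show False by simp
qed

text \<open>If u k sits at position P k of an ordering, the pair of vertices
  u k, u l is a backedge of that ordering.\<close>
definition backedge_pair :: "('a \<Rightarrow> 'a \<Rightarrow> bool) \<Rightarrow> (nat \<Rightarrow> 'a) \<Rightarrow> (nat \<Rightarrow> nat) \<Rightarrow> nat \<Rightarrow> nat \<Rightarrow> bool" where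
  "backedge_pair E u P k l \<longleftrightarrow> (P k < P l \<and> E (u l) (u k)) \<or> (P l < P k \<and> E (u k) (u l))"

lemma backedge_pair_commute: "backedge_pair E u P k l \<longleftrightarrow> backedge_pair E u P l k"
  unfolding backedge_pair_def by auto

lemma matching_ordering_backedge_pair_unique:
  assumes "matching_ordering V E n v" "P permutes {1..n}" "\<And>k. k \<in> {1..n} \<Longrightarrow> v (P k) = u k"
    and "k \<in> {1..n}" "l \<in> {1..n}" "l' \<in> {1..n}"
    and "backedge_pair E u P k l" "backedge_pair E u P k l'"
  shows "l = l'"
proof -
  have P_in: "P i \<in> {1..n}" if "i \<in> {1..n}" for i
    using permutes_in_image[OF assms(2)] that by simp
  have partner: "backedge E v (P k) (P m) \<or> backedge E v (P m) (P k)"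
    if "backedge_pair E u P k m" "m \<in> {1..n}" for m
    using that assms(3,4) unfolding backedge_pair_def backedge_def by auto
  have "P l = P l'"
    by (rule matching_ordering_backedge_partner_unique[OF assms(1) P_in P_in P_in
          partner partner]) (use assms(4-8) in simp_all)
  then show ?thesis using permutes_inj[OF assms(2)] by (simp add: inj_eq)
qed

lemma tournament_edge_iff_not_reverse:
  assumes "tournament V E" "is_ordering V n v" "i \<in> {1..n}" "j \<in> {1..n}" "i \<noteq> j"
  shows "E (v i) (v j) \<longleftrightarrow> \<not> E (v j) (v i)"
proof -
  have bij: "bij_betw v {1..n} V" using assms(2) unfolding is_ordering_def .
  have "v i \<in> V" "v j \<in> V" using bij assms(3,4) by (simp_all add: bij_betw_apply)
  moreover have "v i \<noteq> v j"
    using assms(3-5) bij_betw_imp_inj_on[OF bij] by (simp add: inj_on_eq_iff)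
  ultimately show ?thesis using assms(1) unfolding tournament_def by blast
qed

locale adjacent_swap_orderings =
  fixes V :: "'a set" and E :: "'a \<Rightarrow> 'a \<Rightarrow> bool" and n :: nat and u v w :: "nat \<Rightarrow> 'a"
    and P Q :: "nat \<Rightarrow> nat" and s :: bool
  assumes tournament: "tournament V E"
    and v_matching: "matching_ordering V E n v" and P_permutes: "P permutes {1..n}"
    and v_P: "\<And>k. k \<in> {1..n} \<Longrightarrow> v (P k) = u k"
    and w_matching: "matching_ordering V E n w" and Q_permutes: "Q permutes {1..n}"
    and w_Q: "\<And>k. k \<in> {1..n} \<Longrightarrow> w (Q k) = u k"
    and P_gap: "\<And>k l. 1 \<le> k \<Longrightarrow> l \<le> n \<Longrightarrow> k + 2 \<le> l \<Longrightarrow> P k < P l"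
    and Q_gap: "\<And>k l. 1 \<le> k \<Longrightarrow> l \<le> n \<Longrightarrow> k + 2 \<le> l \<Longrightarrow> Q k < Q l"
    and P_adjacent: "\<And>k. 1 \<le> k \<Longrightarrow> k + 1 \<le> n \<Longrightarrow> P k < P (k + 1) \<longleftrightarrow> (odd k \<longleftrightarrow> s)"
    and Q_adjacent: "\<And>k. 1 \<le> k \<Longrightarrow> k + 1 \<le> n \<Longrightarrow> Q k < Q (k + 1) \<longleftrightarrow> \<not> (odd k \<longleftrightarrow> s)"
begin

abbreviation "v_backedge \<equiv> backedge_pair E u P"
abbreviation "w_backedge \<equiv> backedge_pair E u Q"

lemma u_ordering: "is_ordering V n u"
proof -
  have "is_ordering V n (v \<circ> P)"
    using is_ordering_comp_permutes v_matching P_permutes unfolding matching_ordering_def by blast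
  moreover have "bij_betw u {1..n} V \<longleftrightarrow> bij_betw (v \<circ> P) {1..n} V"
    by (rule bij_betw_cong) (simp add: v_P)
  ultimately show ?thesis unfolding is_ordering_def by simp
qed

lemma u_edge_iff: "k \<in> {1..n} \<Longrightarrow> l \<in> {1..n} \<Longrightarrow> k \<noteq> l \<Longrightarrow> E (u k) (u l) \<longleftrightarrow> \<not> E (u l) (u k)"
  using tournament_edge_iff_not_reverse[OF tournament u_ordering] .

lemma v_backedge_unique:
  "k \<in> {1..n} \<Longrightarrow> l \<in> {1..n} \<Longrightarrow> l' \<in> {1..n} \<Longrightarrow> v_backedge k l \<Longrightarrow> v_backedge k l' \<Longrightarrow> l = l'"
  using matching_ordering_backedge_pair_unique[OF v_matching P_permutes v_P] .

lemma w_backedge_unique: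
  "k \<in> {1..n} \<Longrightarrow> l \<in> {1..n} \<Longrightarrow> l' \<in> {1..n} \<Longrightarrow> w_backedge k l \<Longrightarrow> w_backedge k l' \<Longrightarrow> l = l'"
  using matching_ordering_backedge_pair_unique[OF w_matching Q_permutes w_Q] .

lemma adjacent_backedge_in_exactly_one:
  assumes "1 \<le> k" "k + 1 \<le> n"
  shows "v_backedge k (k + 1) \<longleftrightarrow> \<not> w_backedge k (k + 1)"
proof -
  have "P k \<noteq> P (k + 1)" "Q k \<noteq> Q (k + 1)"
    using permutes_inj[OF P_permutes] permutes_inj[OF Q_permutes] by (simp_all add: inj_eq)
  moreover have "P k < P (k + 1) \<longleftrightarrow> \<not> Q k < Q (k + 1)"
    using P_adjacent[OF assms] Q_adjacent[OF assms] by blast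
  ultimately show ?thesis
    using u_edge_iff[of k "k + 1"] assms unfolding backedge_pair_def by auto
qed

text \<open>A backward pair at distance at least 2 would be a backedge of both orderings, and
  so would meet the adjacent pair at its smaller end in one of them.\<close>
lemma gap_edge_forward:
  assumes "1 \<le> k" "l \<le> n" "k + 2 \<le> l"
  shows "E (u k) (u l)"
proof (rule ccontr)
  have in_range: "k \<in> {1..n}" "k + 1 \<in> {1..n}" "l \<in> {1..n}" using assms by auto
  assume "\<not> E (u k) (u l)"
  then have "E (u l) (u k)" using u_edge_iff[of k l] in_range assms(3) by auto
  then have "v_backedge k l" "w_backedge k l"
    using P_gap[OF assms] Q_gap[OF assms] unfolding backedge_pair_def by auto
  moreover have "v_backedge k (k + 1) \<or> w_backedge k (k + 1)"
    using adjacent_backedge_in_exactly_one assms by auto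
  ultimately show False
    using v_backedge_unique[OF in_range(1,2,3)] w_backedge_unique[OF in_range(1,2,3)] assms(3)
    by auto
qed

lemma adjacent_backedge_alternates:
  assumes "1 \<le> k" "k + 2 \<le> n"
  shows "v_backedge k (k + 1) \<longleftrightarrow> \<not> v_backedge (k + 1) (k + 2)"
proof -
  have in_range: "k + 1 \<in> {1..n}" "k \<in> {1..n}" "k + 2 \<in> {1..n}" using assms by auto
  show ?thesis
    using adjacent_backedge_in_exactly_one[of k] adjacent_backedge_in_exactly_one[of "k + 1"]
      v_backedge_unique[OF in_range] w_backedge_unique[OF in_range] assms
      backedge_pair_commute[of E u P k "k + 1"] backedge_pair_commute[of E u Q k "k + 1"]
    by auto
qed

lemma adjacent_backedge_parity:
  "1 \<le> k \<Longrightarrow> k + 1 \<le> n \<Longrightarrow> v_backedge k (k + 1) \<longleftrightarrow> (v_backedge 1 2 \<longleftrightarrow> odd k)"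
proof (induction k rule: nat_induct_at_least)
  case (Suc k)
  have "v_backedge (Suc k) (Suc k + 1) \<longleftrightarrow> \<not> v_backedge k (k + 1)"
    using adjacent_backedge_alternates[of k] Suc.hyps Suc.prems by simp
  then show ?case using Suc by auto
qed (simp add: numeral_2_eq_2)

text \<open>Whether an adjacent pair is a backedge of v and whether v keeps its order both
  alternate along u, so the direction of the edge between u k and u (k + 1) does not depend on k.\<close>
lemma adjacent_edges_uniform:
  "(\<forall>k. 1 \<le> k \<longrightarrow> k + 1 \<le> n \<longrightarrow> E (u k) (u (k + 1))) \<or>
   (\<forall>k. 1 \<le> k \<longrightarrow> k + 1 \<le> n \<longrightarrow> E (u (k + 1)) (u k))"
proof -
  have "E (u (k + 1)) (u k) \<longleftrightarrow> (v_backedge 1 2 \<longleftrightarrow> s)" if "1 \<le> k" "k + 1 \<le> n" for k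
  proof -
    have "P k \<noteq> P (k + 1)" using permutes_inj[OF P_permutes] by (simp add: inj_eq)
    then have "E (u (k + 1)) (u k) \<longleftrightarrow> (v_backedge k (k + 1) \<longleftrightarrow> P k < P (k + 1))"
      using u_edge_iff[of k "k + 1"] that unfolding backedge_pair_def by auto
    then show ?thesis using adjacent_backedge_parity[OF that] P_adjacent[OF that]
      by argo
  qed
  note adjacent_edge = this
  show ?thesis
  proof (cases "v_backedge 1 2 \<longleftrightarrow> s")
    case True
    then show ?thesis using adjacent_edge by blast
  next
    case False
    have "E (u k) (u (k + 1))" if "1 \<le> k" "k + 1 \<le> n" for k
      using adjacent_edge[OF that] u_edge_iff[of k "k + 1"] that False by auto
    then show ?thesis by blast
  qed
qed

lemma u_transitive_or_Pn: "transitive_ordering V E n u \<or> Pn_ordering V E n u"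
proof (cases "\<forall>k. 1 \<le> k \<longrightarrow> k + 1 \<le> n \<longrightarrow> E (u k) (u (k + 1))")
  case True
  have "E (u i) (u j)" if "i \<in> {1..n}" "j \<in> {1..n}" "i < j" for i j
    using gap_edge_forward[of i j] True that by (cases "j = i + 1") auto
  then show ?thesis unfolding transitive_ordering_def using u_ordering by blast
next
  case False
  then have "E (u (k + 1)) (u k)" if "1 \<le> k" "k + 1 \<le> n" for k
    using adjacent_edges_uniform that by blast
  then show ?thesis unfolding Pn_ordering_def using u_ordering gap_edge_forward by auto
qed

lemma transitive_or_Pn_and_pi_ordering:
  assumes "\<And>i. P (P i) = i"
  shows "(transitive_tournament V E \<or> iso_Pn V E n) \<and> is_pi_ordering V E n P v"
proof
  have "card V = n"
    using u_ordering bij_betw_same_card unfolding is_ordering_def by fastforce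
  then show "transitive_tournament V E \<or> iso_Pn V E n"
    using u_transitive_or_Pn tournament unfolding transitive_tournament_def iso_Pn_def by blast
  have "v i = u (P i)" if "i \<in> {1..n}" for i
    using v_P[of "P i"] assms permutes_in_image[OF P_permutes] that by simp
  then show "is_pi_ordering V E n P v"
    using u_transitive_or_Pn unfolding is_pi_ordering_def by blast
qed

end

lemma sigmaX_reordering:
  assumes "tournament V E" "matching_ordering V E n v" "matching_ordering V E n (v \<circ> sigmaX n)"
  shows "(transitive_tournament V E \<or> iso_Pn V E n) \<and> is_pi_ordering V E n (pi2 n) v"
proof -
  interpret adjacent_swap_orderings V E n "v \<circ> pi2 n" v "v \<circ> sigmaX n" "pi2 n" "pi1 n" True
    using assms pi1_permutes pi2_permutes pi1_less_pi1_Suc_iff pi2_less_pi2_Suc_iff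
    by unfold_locales
      (simp_all add: sigmaX_eq_pi2_pi1 pi1_strict_mono_gap pi2_strict_mono_gap)
  show ?thesis by (rule transitive_or_Pn_and_pi_ordering) simp
qed

lemma inv_sigmaX_reordering:
  assumes "tournament V E" "matching_ordering V E n v" "matching_ordering V E n (v \<circ> inv (sigmaX n))"
  shows "(transitive_tournament V E \<or> iso_Pn V E n) \<and> is_pi_ordering V E n (pi1 n) v"
proof -
  interpret adjacent_swap_orderings V E n "v \<circ> pi1 n" v "v \<circ> inv (sigmaX n)" "pi1 n" "pi2 n" False
    using assms pi1_permutes pi2_permutes pi1_less_pi1_Suc_iff pi2_less_pi2_Suc_iff
    by unfold_locales
      (simp_all add: inv_sigmaX_eq_pi1_pi2 pi1_strict_mono_gap pi2_strict_mono_gap)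
  show ?thesis by (rule transitive_or_Pn_and_pi_ordering) simp
qed

lemma pi1_4_simps: "pi1 4 1 = 2" "pi1 4 2 = 1" "pi1 4 3 = 4" "pi1 4 4 = 3"
  by (simp_all add: pi1_def)

lemma pi2_4_simps: "pi2 4 1 = 1" "pi2 4 2 = 3" "pi2 4 3 = 2" "pi2 4 4 = 4"
  by (simp_all add: pi2_def)

lemma tauX_tauX [simp]: "tauX (tauX i) = i"
  by (simp add: tauX_def transpose_def)

lemma tauX_permutes: "tauX permutes {1..4}"
  unfolding tauX_def by (intro permutes_compose permutes_swap_id) auto

lemma Pn_ordering_4I:
  assumes "is_ordering V 4 u"
    and "E (u 2) (u 1)" "E (u 3) (u 2)" "E (u 4) (u 3)" "E (u 1) (u 3)" "E (u 2) (u 4)" "E (u 1) (u 4)"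
  shows "Pn_ordering V E 4 u"
proof -
  have "{1..4::nat} = {1, 2, 3, 4}" by auto
  then show ?thesis unfolding Pn_ordering_def using assms by (simp add: eval_nat_numeral)
qed

text \<open>The four pairs between positions 1, 2 and 3, 4 are ordered oppositely by v and v \<circ> tauX,
  so each of them is a backedge of exactly one of the two orderings; the matching condition
  leaves for each ordering two disjoint ones, and no room for backedges 1 2 or 3 4.\<close>
lemma tauX_reordering:
  assumes T: "tournament V E" and v: "matching_ordering V E 4 v"
    and w: "matching_ordering V E 4 (v \<circ> tauX)"
  shows "iso_Pn V E 4 \<and> (is_pi_ordering V E 4 (pi2 4) v \<or> is_pi2pi1_P4_ordering V E v)"
proof -
  have ordering: "is_ordering V 4 v" using v unfolding matching_ordering_def by blast
  have edge: "E (v i) (v j) \<longleftrightarrow> \<not> E (v j) (v i)" if "i \<in> {1..4}" "j \<in> {1..4}" "i \<noteq> j" for i j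
    using tournament_edge_iff_not_reverse[OF T ordering that] .
  have v_unique: "l = l'" if "k \<in> {1..4}" "l \<in> {1..4}" "l' \<in> {1..4}"
    "backedge_pair E v id k l" "backedge_pair E v id k l'" for k l l'
    using matching_ordering_backedge_pair_unique[OF v permutes_id] that by simp
  have w_unique: "l = l'" if "k \<in> {1..4}" "l \<in> {1..4}" "l' \<in> {1..4}"
    "backedge_pair E v tauX k l" "backedge_pair E v tauX k l'" for k l l'
    using matching_ordering_backedge_pair_unique[OF w tauX_permutes] that by simp
  have e12: "E (v 1) (v 2)"
    using v_unique[of 1 2 3] w_unique[of 1 2 3] edge[of 1 2] edge[of 1 3]
    by (auto simp: backedge_pair_def tauX_def transpose_def)
  have e34: "E (v 3) (v 4)"
    using v_unique[of 3 4 1] w_unique[of 3 4 1] edge[of 3 4] edge[of 1 3]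
    by (auto simp: backedge_pair_def tauX_def transpose_def)
  show ?thesis
  proof (cases "E (v 3) (v 1)")
    case True
    have e23: "E (v 2) (v 3)"
      using v_unique[of 3 1 2] True edge[of 2 3] by (auto simp: backedge_pair_def)
    have e14: "E (v 1) (v 4)"
      using v_unique[of 1 3 4] True edge[of 1 4] by (auto simp: backedge_pair_def)
    have e42: "E (v 4) (v 2)"
      using w_unique[of 4 1 2] e14 edge[of 2 4] by (auto simp: backedge_pair_def tauX_def transpose_def)
    let ?u = "v \<circ> pi2 4"
    have "Pn_ordering V E 4 ?u"
      using is_ordering_comp_permutes[OF ordering pi2_permutes] True e12 e34 e23 e14 e42
      by (intro Pn_ordering_4I) (simp_all only: comp_apply pi2_4_simps)
    moreover have "\<forall>i\<in>{1..4}. v i = ?u (pi2 4 i)" by simp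
    ultimately show ?thesis using T unfolding iso_Pn_def is_pi_ordering_def by blast
  next
    case False
    then have e13: "E (v 1) (v 3)" using edge[of 1 3] by simp
    have e32: "E (v 3) (v 2)"
      using w_unique[of 3 1 2] e13 edge[of 2 3] by (auto simp: backedge_pair_def tauX_def transpose_def)
    have e24: "E (v 2) (v 4)"
      using v_unique[of 2 3 4] e32 edge[of 2 4] by (auto simp: backedge_pair_def)
    have e41: "E (v 4) (v 1)"
      using w_unique[of 4 2 1] e24 edge[of 1 4] by (auto simp: backedge_pair_def tauX_def transpose_def)
    let ?u = "v \<circ> (pi2 4 \<circ> pi1 4)"
    have "Pn_ordering V E 4 ?u"
      using is_ordering_comp_permutes[OF ordering permutes_compose[OF pi1_permutes pi2_permutes]]
        e12 e34 e13 e32 e24 e41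
      by (intro Pn_ordering_4I) (simp_all only: comp_apply pi1_4_simps pi2_4_simps)
    moreover have "v 1 = ?u 2" "v 2 = ?u 4" "v 3 = ?u 1" "v 4 = ?u 3"
      by (simp_all only: comp_apply pi1_4_simps pi2_4_simps)
    ultimately show ?thesis using T unfolding iso_Pn_def is_pi2pi1_P4_ordering_def by blast
  qed
qed

theorem proposition5p3:
  fixes V :: "'a set" and E :: "'a \<Rightarrow> 'a \<Rightarrow> bool" and n :: nat
    and v :: "nat \<Rightarrow> 'a" and \<sigma> :: "nat \<Rightarrow> nat"
  assumes "tournament V E"
    and "matching_ordering V E n v"
    and "\<sigma> permutes {1..n}"
    and "matching_ordering V E n (v \<circ> \<sigma>)"
  shows "(\<sigma> = sigmaX n \<longrightarrow>
            (transitive_tournament V E \<or> iso_Pn V E n) \<and> is_pi_ordering V E n (pi2 n) v)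
       \<and> (\<sigma> = inv (sigmaX n) \<longrightarrow>
            (transitive_tournament V E \<or> iso_Pn V E n) \<and> is_pi_ordering V E n (pi1 n) v)
       \<and> (n = 4 \<and> \<sigma> = tauX \<longrightarrow>
            iso_Pn V E 4 \<and> (is_pi_ordering V E 4 (pi2 4) v \<or> is_pi2pi1_P4_ordering V E v))"
  using sigmaX_reordering[OF assms(1,2)] inv_sigmaX_reordering[OF assms(1,2)]
    tauX_reordering[OF assms(1)] assms(2,4)
  by blast

end
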